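(* Let $P_1,P_2,N>0$. If $\sigma_1^2\ge P_1\big(\frac32+\frac{P_2}{N}\big)$ and $\sigma_2^2\ge P_2\big(\frac32+\frac{P_1}{N}\big)$, then $\mathcal R_{\mathrm{Car}}(P_1,P_2,N,\sigma_1^2,\sigma_2^2)=\mathcal C_{\mathrm{MAC}}(P_1,P_2,N)$.
   Context: Notation: for $x\in[0,1]$, $\bar x=1-x$; $L(a,b)=\frac12\log(1+\frac ab)$; and $G=\bar\alpha_1P_1+\bar\alpha_2P_2+2\sqrt{\bar\alpha_1\bar\alpha_2P_1P_2}$, $H=N+\alpha_1P_1+\alpha_2P_2$. The region $\mathcal R_{\mathrm{Car}}(P_1,P_2,N,\sigma_1^2,\sigma_2^2)$ (for $\sigma_1^2,\sigma_2^2\ge0$) is the set of pairs $(R_1,R_2)$ for which there exist nonnegative $R_{1,0},R_{1,1}$ with $R_{1,0}+R_{1,1}=R_1$, nonnegative $R_{2,0},R_{2,2}$ with $R_{2,0}+R_{2,2}=R_2$, and $\alpha_1,\alpha_2,\beta_1,\beta_2,\upsilon\in[0,1]$ such that: $R_{1,0}\le L(\alpha_1\bar\beta_1P_1,\ \alpha_1\beta_1P_1+N+\sigma_2^2)$; $R_{2,0}\le L(\alpha_2\bar\beta_2P_2,\ \alpha_2\beta_2P_2+N+\sigma_1^2)$; $R_{1,1}\le L(\alpha_1\beta_1P_1,N)$; $R_{2,2}\le L(\alpha_2\beta_2P_2,N)$; $R_{1,0}+R_{2,0}\le L(\alpha_1\bar\beta_1P_1+\alpha_2\bar\beta_2P_2,N)+L(G,H)$;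 $R_{1,0}+R_{2,2}\le L(\alpha_1\bar\beta_1P_1+\alpha_2\beta_2P_2,N)+L(\upsilon G,H)$; $R_{2,0}+R_{1,1}\le L(\alpha_1\beta_1P_1+\alpha_2\bar\beta_2P_2,N)+L(\bar\upsilon G,H)$; $R_{1,1}+R_{2,2}\le L(\alpha_1\beta_1P_1+\alpha_2\beta_2P_2,N)$; $R_1+R_{2,0}\le L(\alpha_1P_1+\alpha_2\bar\beta_2P_2,N)+L(G,H)$; $R_{1,0}+R_2\le L(\alpha_1\bar\beta_1P_1+\alpha_2P_2,N)+L(G,H)$; $R_1+R_{2,2}\le L(\alpha_1P_1+\alpha_2\beta_2P_2,N)+L(\upsilon G,H)$; $R_{1,1}+R_2\le L(\alpha_1\beta_1P_1+\alpha_2P_2,N)+L(\bar\upsilon G,H)$; $R_1+R_2\le L(P_1+P_2+2\sqrt{\bar\alpha_1\bar\alpha_2P_1P_2},N)$. The no-feedback capacity region $\mathcal C_{\mathrm{MAC}}(P_1,P_2,N)$ is the set of nonnegative $(R_1,R_2)$ with $R_1\le\frac12\log(1+\frac{P_1}{N})$, $R_2\le\frac12\log(1+\frac{P_2}{N})$, $R_1+R_2\le\frac12\log(1+\frac{P_1+P_2}{N})$. *)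

theory Defs
  imports "HOL-Analysis.Analysis"
begin

text \<open>Logarithms are taken in base 2 (bits); the region equality does not depend on the base.\<close>

definition Lf :: "real \<Rightarrow> real \<Rightarrow> real" where
  "Lf a b = (1/2) * log 2 (1 + a / b)"

definition Gf :: "real \<Rightarrow> real \<Rightarrow> real \<Rightarrow> real \<Rightarrow> real" where
  "Gf a1 a2 P1 P2 = (1 - a1) * P1 + (1 - a2) * P2 + 2 * sqrt ((1 - a1) * (1 - a2) * P1 * P2)"

definition Hf :: "real \<Rightarrow> real \<Rightarrow> real \<Rightarrow> real \<Rightarrow> real \<Rightarrow> real" where
  "Hf a1 a2 P1 P2 N = N + a1 * P1 + a2 * P2"

definition R_Car :: "real \<Rightarrow> real \<Rightarrow> real \<Rightarrow> real \<Rightarrow> real \<Rightarrow> (real \<times> real) set" where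
  "R_Car P1 P2 N s1 s2 = {(R1, R2). \<exists>R10 R11 R20 R22 a1 a2 b1 b2 u.
     0 \<le> R10 \<and> 0 \<le> R11 \<and> R10 + R11 = R1 \<and>
     0 \<le> R20 \<and> 0 \<le> R22 \<and> R20 + R22 = R2 \<and>
     a1 \<in> {0..1} \<and> a2 \<in> {0..1} \<and> b1 \<in> {0..1} \<and> b2 \<in> {0..1} \<and> u \<in> {0..1} \<and>
     (let G = Gf a1 a2 P1 P2; H = Hf a1 a2 P1 P2 N in
       R10 \<le> Lf (a1 * (1 - b1) * P1) (a1 * b1 * P1 + N + s2) \<and>
       R20 \<le> Lf (a2 * (1 - b2) * P2) (a2 * b2 * P2 + N + s1) \<and>
       R11 \<le> Lf (a1 * b1 * P1) N \<and>
       R22 \<le> Lf (a2 * b2 * P2) N \<and>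
       R10 + R20 \<le> Lf (a1 * (1 - b1) * P1 + a2 * (1 - b2) * P2) N + Lf G H \<and>
       R10 + R22 \<le> Lf (a1 * (1 - b1) * P1 + a2 * b2 * P2) N + Lf (u * G) H \<and>
       R20 + R11 \<le> Lf (a1 * b1 * P1 + a2 * (1 - b2) * P2) N + Lf ((1 - u) * G) H \<and>
       R11 + R22 \<le> Lf (a1 * b1 * P1 + a2 * b2 * P2) N \<and>
       R1 + R20 \<le> Lf (a1 * P1 + a2 * (1 - b2) * P2) N + Lf G H \<and>
       R10 + R2 \<le> Lf (a1 * (1 - b1) * P1 + a2 * P2) N + Lf G H \<and>
       R1 + R22 \<le> Lf (a1 * P1 + a2 * b2 * P2) N + Lf (u * G) H \<and>
       R11 + R2 \<le> Lf (a1 * b1 * P1 + a2 * P2) N + Lf ((1 - u) * G) H \<and>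
       R1 + R2 \<le> Lf (P1 + P2 + 2 * sqrt ((1 - a1) * (1 - a2) * P1 * P2)) N)}"

definition C_MAC :: "real \<Rightarrow> real \<Rightarrow> real \<Rightarrow> (real \<times> real) set" where
  "C_MAC P1 P2 N = {(R1, R2). 0 \<le> R1 \<and> 0 \<le> R2 \<and>
     R1 \<le> (1/2) * log 2 (1 + P1 / N) \<and> R2 \<le> (1/2) * log 2 (1 + P2 / N) \<and>
     R1 + R2 \<le> (1/2) * log 2 (1 + (P1 + P2) / N)}"

end

theory Submission
  imports Defs
begin

(* Converse inclusion C_MAC \<subseteq> R_Car holds unconditionally: with
   alpha_i = beta_i = 1 the common message parts vanish (G = 0), and every
   constraint of R_Car collapses to one of the MAC constraints or to 0 \<le> 0.

   Forward inclusion R_Car \<subseteq> C_MAC needs only s1 \<ge> P1 and s2 \<ge> P2, and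
   only five of the thirteen constraints.  Writing x_i for the private and
   y_i for the common power of user i, the rate bounds are sums of terms
   L(a,b) = 1/2 log(1 + a/b), so each MAC bound reduces to an inequality
   between products of factors (1 + a/b): one for each single-user bound and
   one (a polynomial cross-term estimate) for the sum-rate bound.
   The hypotheses of the theorem imply s_i \<ge> P_i, which finishes the proof. *)

lemma Lf_add_le:
  fixes a b c d e f :: real
  assumes "0 \<le> a / b" "0 \<le> c / d" "(1 + a/b) * (1 + c/d) \<le> 1 + e/f"
  shows "Lf a b + Lf c d \<le> Lf e f"
proof -
  have "log 2 (1 + a/b) + log 2 (1 + c/d) = log 2 ((1 + a/b) * (1 + c/d))"
    using assms by (simp add: log_mult_pos)
  also have "\<dots> \<le> log 2 (1 + e/f)"
    using assms by (intro log_mono) (auto simp: add_pos_nonneg)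
  finally show ?thesis by (simp add: Lf_def)
qed

lemma Lf_add3_le:
  fixes a b c d g h e f :: real
  assumes "0 \<le> a / b" "0 \<le> c / d" "0 \<le> g / h"
    and "(1 + a/b) * (1 + c/d) * (1 + g/h) \<le> 1 + e/f"
  shows "Lf a b + Lf c d + Lf g h \<le> Lf e f"
proof -
  have "log 2 (1 + a/b) + log 2 (1 + c/d) + log 2 (1 + g/h)
        = log 2 ((1 + a/b) * (1 + c/d) * (1 + g/h))"
    using assms by (simp add: log_mult_pos)
  also have "\<dots> \<le> log 2 (1 + e/f)"
    using assms by (intro log_mono) (auto simp: add_pos_nonneg)
  finally show ?thesis by (simp add: Lf_def algebra_simps)
qed

lemma Lf_zero [simp]: "Lf 0 b = 0"
  by (simp add: Lf_def)

text \<open>Single user: decoding the common part y against the extra noise s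
  and then the private part x against N is never better than decoding
  the whole power x + y \<le> P against N.\<close>

lemma single_user_product:
  fixes N x y s P :: real
  assumes "N > 0" "x \<ge> 0" "y \<ge> 0" "s \<ge> 0" "x + y \<le> P"
  shows "(1 + y/(x+N+s)) * (1 + x/N) \<le> 1 + P/N"
proof -
  have "(1 + y/(x+N+s)) * (1 + x/N) \<le> (1 + y/(x+N)) * (1 + x/N)"
    using assms by (intro mult_right_mono add_left_mono divide_left_mono) auto
  also have "\<dots> = 1 + (x+y)/N"
  proof -
    have "x + N > 0" using assms by simp
    then have "(1 + y/(x+N)) * (1 + x/N) = (x+N+y)/(x+N) * ((x+N)/N)"
      using assms by (simp add: field_simps)
    also have "\<dots> = (x+N+y)/N"
      using \<open>x + N > 0\<close> by simp
    finally show ?thesis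
      using assms by (simp add: field_simps)
  qed
  also have "\<dots> \<le> 1 + P/N"
    using assms by (simp add: divide_right_mono)
  finally show ?thesis .
qed

text \<open>The polynomial core of the sum-rate bound, with A, B the effective
  noise levels of the two common parts and D = N + x1 + x2.\<close>

lemma cross_term_bound:
  fixes A B D y1 y2 :: real
  assumes "y1 \<ge> 0" "y2 \<ge> 0" "D \<ge> 0" "A - D \<ge> y2" "B \<ge> D"
  shows "(A + y1) * (B + y2) * D \<le> (D + y1 + y2) * A * B"
proof -
  have "y1 * D * y2 \<le> y1 * B * (A - D)"
    using assms by (intro mult_mono) auto
  moreover have "0 \<le> y2 * A * (B - D)"
    using assms by simp
  ultimately show ?thesis by (simp add: algebra_simps)
qed

text \<open>Sum rate: the two common parts (each seeing the other user's
  extra noise) and the two private parts jointly decoded against N.\<close>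

lemma sum_rate_product:
  fixes N x1 y1 x2 y2 s1 s2 P1 P2 :: real
  assumes "N > 0" "x1 \<ge> 0" "y1 \<ge> 0" "x2 \<ge> 0" "y2 \<ge> 0"
    and "s1 \<ge> x1" "s2 \<ge> x2 + y2" "x1 + y1 \<le> P1" "x2 + y2 \<le> P2"
  shows "(1 + y1/(x1+N+s2)) * (1 + y2/(x2+N+s1)) * (1 + (x1+x2)/N) \<le> 1 + (P1+P2)/N"
proof -
  define A where "A = x1 + N + s2"
  define B where "B = x2 + N + s1"
  define D where "D = N + x1 + x2"
  have pos: "A > 0" "B > 0" "D > 0"
    using assms by (auto simp: A_def B_def D_def)
  have "(1 + y1/A) * (1 + y2/B) * (D/N) = (A + y1) * (B + y2) * D / (A * B * N)"
    using pos by (simp add: field_simps)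
  also have "\<dots> \<le> (D + y1 + y2) * A * B / (A * B * N)"
    using assms pos by (intro divide_right_mono cross_term_bound) (auto simp: A_def B_def D_def)
  also have "\<dots> = (D + y1 + y2) / N"
    using pos by simp
  also have "\<dots> = 1 + (x1 + y1 + x2 + y2)/N"
    using assms by (simp add: D_def field_simps)
  also have "\<dots> \<le> 1 + (P1+P2)/N"
    using assms by (simp add: divide_right_mono)
  moreover have "1 + (x1+x2)/N = D/N"
    using assms by (simp add: D_def field_simps)
  ultimately show ?thesis
    by (simp add: A_def B_def)
qed

lemma rates_in_C_MAC:
  fixes N P1 P2 s1 s2 x1 y1 x2 y2 R10 R11 R20 R22 :: real
  assumes "N > 0" "x1 \<ge> 0" "y1 \<ge> 0" "x2 \<ge> 0" "y2 \<ge> 0"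
    and "x1 + y1 \<le> P1" "x2 + y2 \<le> P2" "s1 \<ge> P1" "s2 \<ge> P2"
    and "0 \<le> R10" "0 \<le> R11" "0 \<le> R20" "0 \<le> R22"
    and "R10 \<le> Lf y1 (x1 + N + s2)"
    and "R20 \<le> Lf y2 (x2 + N + s1)"
    and "R11 \<le> Lf x1 N"
    and "R22 \<le> Lf x2 N"
    and "R11 + R22 \<le> Lf (x1 + x2) N"
  shows "(R10 + R11, R20 + R22) \<in> C_MAC P1 P2 N"
proof -
  have "Lf y1 (x1 + N + s2) + Lf x1 N \<le> Lf P1 N"
    using assms by (intro Lf_add_le single_user_product) auto
  moreover have "Lf y2 (x2 + N + s1) + Lf x2 N \<le> Lf P2 N"
    using assms by (intro Lf_add_le single_user_product) auto
  moreover have "Lf y1 (x1 + N + s2) + Lf y2 (x2 + N + s1) + Lf (x1 + x2) N \<le> Lf (P1 + P2) N"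
    using assms by (intro Lf_add3_le sum_rate_product) auto
  ultimately show ?thesis
    using assms by (auto simp: C_MAC_def Lf_def)
qed

lemma R_Car_subset_C_MAC:
  fixes P1 P2 N s1 s2 :: real
  assumes "P1 \<ge> 0" "P2 \<ge> 0" "N > 0" "s1 \<ge> P1" "s2 \<ge> P2"
  shows "R_Car P1 P2 N s1 s2 \<subseteq> C_MAC P1 P2 N"
proof
  fix z assume "z \<in> R_Car P1 P2 N s1 s2"
  then obtain R10 R11 R20 R22 a1 a2 b1 b2 where
    z: "z = (R10 + R11, R20 + R22)"
    and rates: "0 \<le> R10" "0 \<le> R11" "0 \<le> R20" "0 \<le> R22"
    and params: "a1 \<in> {0..1}" "a2 \<in> {0..1}" "b1 \<in> {0..1}" "b2 \<in> {0..1}"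
    and constraints: "R10 \<le> Lf (a1 * (1 - b1) * P1) (a1 * b1 * P1 + N + s2)"
        "R20 \<le> Lf (a2 * (1 - b2) * P2) (a2 * b2 * P2 + N + s1)"
        "R11 \<le> Lf (a1 * b1 * P1) N" "R22 \<le> Lf (a2 * b2 * P2) N"
        "R11 + R22 \<le> Lf (a1 * b1 * P1 + a2 * b2 * P2) N"
    unfolding R_Car_def Let_def by blast
  have power_split: "a * b * P + a * (1 - b) * P \<le> P" "0 \<le> a * b * P" "0 \<le> a * (1 - b) * P"
    if "a \<in> {0..1}" "b \<in> {0..1}" "P \<ge> 0" for a b P :: real
  proof -
    have "a * b * P + a * (1 - b) * P = a * P"
      by (simp add: algebra_simps)
    also have "\<dots> \<le> P"
      using that by (intro mult_left_le_one_le) auto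
    finally show "a * b * P + a * (1 - b) * P \<le> P" .
    show "0 \<le> a * b * P" "0 \<le> a * (1 - b) * P"
      using that by auto
  qed
  show "z \<in> C_MAC P1 P2 N"
    unfolding z
    by (rule rates_in_C_MAC[where ?x1.0 = "a1 * b1 * P1" and ?y1.0 = "a1 * (1 - b1) * P1"
                              and ?x2.0 = "a2 * b2 * P2" and ?y2.0 = "a2 * (1 - b2) * P2"])
       (use assms params rates constraints power_split in auto)
qed

lemma C_MAC_subset_R_Car: "C_MAC P1 P2 N \<subseteq> R_Car P1 P2 N s1 s2"
proof
  fix z assume "z \<in> C_MAC P1 P2 N"
  then obtain R1 R2 where z: "z = (R1, R2)"
    and bounds: "0 \<le> R1" "0 \<le> R2" "R1 \<le> Lf P1 N" "R2 \<le> Lf P2 N" "R1 + R2 \<le> Lf (P1 + P2) N"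
    unfolding C_MAC_def Lf_def by blast
  have no_common_power: "Gf 1 1 P1 P2 = 0"
    by (simp add: Gf_def)
  show "z \<in> R_Car P1 P2 N s1 s2"
    unfolding z R_Car_def Let_def mem_Collect_eq case_prod_conv
    by (rule exI[of _ 0], rule exI[of _ R1], rule exI[of _ 0], rule exI[of _ R2],
        rule exI[of _ 1], rule exI[of _ 1], rule exI[of _ 1], rule exI[of _ 1], rule exI[of _ 0])
       (simp add: bounds no_common_power)
qed

theorem mainTheorem13:
  fixes P1 P2 N s1 s2 :: real
  assumes "P1 > 0" and "P2 > 0" and "N > 0"
    and "s1 \<ge> P1 * (3/2 + P2 / N)" and "s2 \<ge> P2 * (3/2 + P1 / N)"
  shows "R_Car P1 P2 N s1 s2 = C_MAC P1 P2 N"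
proof -
  have "0 \<le> P1 * (P2 / N)" "0 \<le> P2 * (P1 / N)"
    using assms by simp_all
  then have "P1 \<le> P1 * (3/2 + P2 / N)" "P2 \<le> P2 * (3/2 + P1 / N)"
    unfolding distrib_left using assms by linarith+
  then have "s1 \<ge> P1" "s2 \<ge> P2"
    using assms(4,5) by simp_all
  then show ?thesis
    using assms by (intro subset_antisym R_Car_subset_C_MAC C_MAC_subset_R_Car) auto
qed

end
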